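(* Let $I$ be a compact interval in $\mathbb{R}$ (of positive length) and $f:I\to\mathcal{K}(\mathbb{R})$ continuous. Then the distance set $\Delta(\mathcal{G}_*(f))=\{|x-x_*|+\mathfrak{H}(f(x),f(x_* )):x,x_*\in I\}$ is an interval, and $\dim_H\Delta(\mathcal{G}_*(f))=\underline{\dim}_B\Delta(\mathcal{G}_*(f))=\overline{\dim}_B\Delta(\mathcal{G}_*(f))=1$.
   Context: $\mathcal{K}(\mathbb{R})$: non-empty compact subsets of $\mathbb{R}$ with the Hausdorff distance $\mathfrak{H}$. $\mathcal{G}_*(f)=\{(x,f(x)):x\in I\}$. $\dim_H$, $\underline{\dim}_B$, $\overline{\dim}_B$: Hausdorff, lower box and upper box dimensions. *)

theory Defs
  imports "HOL-Analysis.Analysis" "HOL-Library.Liminf_Limsup"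
begin

text \<open>Hausdorff distance between two subsets of the reals (intended for non-empty
  compact sets, where it is the usual Hausdorff metric on K(R)).\<close>
definition hausdorff_dist :: "real set \<Rightarrow> real set \<Rightarrow> real" where
  "hausdorff_dist S T = max (SUP x\<in>S. infdist x T) (SUP y\<in>T. infdist y S)"

definition hausdorff_pre :: "real \<Rightarrow> real \<Rightarrow> real set \<Rightarrow> ennreal" where
  "hausdorff_pre s \<delta> A = (INF U \<in> {U :: nat \<Rightarrow> real set.
       (\<forall>i. bounded (U i) \<and> diameter (U i) \<le> \<delta>) \<and> A \<subseteq> (\<Union>i. U i)}.
       (\<Sum>i. ennreal (diameter (U i) powr s)))"

definition hausdorff_measure :: "real \<Rightarrow> real set \<Rightarrow> ennreal" where
  "hausdorff_measure s A = (SUP \<delta>\<in>{0<..}. hausdorff_pre s \<delta> A)"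

text \<open>Hausdorff dimension: inf of s with H^s(A) = 0 (positive s suffice, by monotonicity).\<close>
definition hausdorff_dim :: "real set \<Rightarrow> ereal" where
  "hausdorff_dim A = Inf {ereal s | s. s > 0 \<and> hausdorff_measure s A = 0}"

definition cover_number :: "real \<Rightarrow> real set \<Rightarrow> nat" where
  "cover_number \<delta> A = Inf {card F | F. finite F \<and> A \<subseteq> \<Union>F \<and>
       (\<forall>U\<in>F. bounded U \<and> diameter U \<le> \<delta>)}"

definition lower_box_dim :: "real set \<Rightarrow> ereal" where
  "lower_box_dim A = Liminf (at_right 0)
      (\<lambda>\<delta>. ereal (ln (real (cover_number \<delta> A)) / - ln \<delta>))"

definition upper_box_dim :: "real set \<Rightarrow> ereal" where
  "upper_box_dim A = Limsup (at_right 0)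
      (\<lambda>\<delta>. ereal (ln (real (cover_number \<delta> A)) / - ln \<delta>))"

end

theory Submission
  imports Defs "HOL-Real_Asymp.Real_Asymp"
begin

text \<open>The Hausdorff distance is a pseudometric on non-empty bounded sets, so
  \<open>(x, y) \<mapsto> \<bar>x - y\<bar> + hausdorff_dist (f x) (f y)\<close> is continuous on the compact connected
  square \<open>[a, b]\<^sup>2\<close>. Its image, the distance set, is therefore a compact interval; it
  consists of non-negative numbers and contains \<open>0\<close> (the diagonal) and a number
  \<open>\<ge> b - a > 0\<close>, so it is \<open>[0, M]\<close> with \<open>M > 0\<close>.

  An interval of length \<open>L > 0\<close> has all three dimensions equal to 1. By Lebesgue measure,
  every cover by sets of diameter \<open>\<le> \<delta>\<close> has total diameter \<open>\<ge> L\<close>: it has at least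
  \<open>L/\<delta>\<close> members, and for \<open>\<delta> \<le> 1\<close>, \<open>s \<le> 1\<close> the sum of the \<open>s\<close>-th powers of the diameters
  is \<open>\<ge> L\<close>. Conversely the grid of mesh \<open>h\<close> uses at most \<open>L/h + 1\<close> intervals, and
  \<open>(L/h + 1) h\<^sup>s \<rightarrow> 0\<close> for \<open>s > 1\<close>.\<close>

definition hausdorff_excess :: "'a::metric_space set \<Rightarrow> 'a set \<Rightarrow> real" where
  "hausdorff_excess S T = (SUP x\<in>S. infdist x T)"

lemma bdd_above_infdist_image:
  assumes "bounded S" "T \<noteq> {}"
  shows "bdd_above ((\<lambda>x. infdist x T) ` S)"
proof -
  obtain t where "t \<in> T" using assms(2) by blast
  moreover obtain e where "\<forall>x\<in>S. dist t x \<le> e" using bounded_any_center assms(1) by metis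
  ultimately show ?thesis
    by (intro bdd_aboveI2[where M=e]) (metis dist_commute infdist_le order_trans)
qed

lemma infdist_le_hausdorff_excess:
  "bounded S \<Longrightarrow> T \<noteq> {} \<Longrightarrow> x \<in> S \<Longrightarrow> infdist x T \<le> hausdorff_excess S T"
  unfolding hausdorff_excess_def by (rule cSUP_upper[OF _ bdd_above_infdist_image])

lemma hausdorff_excess_nonneg:
  "S \<noteq> {} \<Longrightarrow> bounded S \<Longrightarrow> T \<noteq> {} \<Longrightarrow> 0 \<le> hausdorff_excess S T"
  by (meson all_not_in_conv infdist_le_hausdorff_excess infdist_nonneg order_trans)

lemma hausdorff_excess_self: "S \<noteq> {} \<Longrightarrow> hausdorff_excess S S = 0"
  unfolding hausdorff_excess_def by simp

lemma hausdorff_excess_triangle: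
  assumes "A \<noteq> {}" "B \<noteq> {}" "C \<noteq> {}" "bounded A" "bounded B" "bounded C"
  shows "hausdorff_excess A C \<le> hausdorff_excess A B + hausdorff_excess B C"
  unfolding hausdorff_excess_def[of A C]
proof (rule cSUP_least)
  fix x assume x: "x \<in> A"
  have "infdist x C - hausdorff_excess B C \<le> infdist x B"
    unfolding infdist_notempty[OF assms(2)]
  proof (rule cINF_greatest)
    fix y assume "y \<in> B"
    then have "infdist y C \<le> hausdorff_excess B C"
      using infdist_le_hausdorff_excess assms by blast
    then show "infdist x C - hausdorff_excess B C \<le> dist x y"
      using infdist_triangle[of x C y] by linarith
  qed fact
  moreover have "infdist x B \<le> hausdorff_excess A B"
    using infdist_le_hausdorff_excess assms x by blast
  ultimately show "infdist x C \<le> hausdorff_excess A B + hausdorff_excess B C" by linarith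
qed fact

lemma hausdorff_dist_eq_max_excess:
  "hausdorff_dist S T = max (hausdorff_excess S T) (hausdorff_excess T S)"
  unfolding hausdorff_dist_def hausdorff_excess_def ..

lemma hausdorff_dist_commute: "hausdorff_dist S T = hausdorff_dist T S"
  unfolding hausdorff_dist_eq_max_excess by simp

lemma hausdorff_dist_self: "S \<noteq> {} \<Longrightarrow> hausdorff_dist S S = 0"
  unfolding hausdorff_dist_eq_max_excess by (simp add: hausdorff_excess_self)

lemma hausdorff_dist_nonneg:
  "S \<noteq> {} \<Longrightarrow> bounded S \<Longrightarrow> T \<noteq> {} \<Longrightarrow> 0 \<le> hausdorff_dist S T"
  unfolding hausdorff_dist_eq_max_excess by (simp add: le_max_iff_disj hausdorff_excess_nonneg)

lemma hausdorff_dist_triangle: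
  assumes "A \<noteq> {}" "B \<noteq> {}" "C \<noteq> {}" "bounded A" "bounded B" "bounded C"
  shows "hausdorff_dist A C \<le> hausdorff_dist A B + hausdorff_dist B C"
  using hausdorff_excess_triangle[OF assms] hausdorff_excess_triangle[of C B A] assms
  unfolding hausdorff_dist_eq_max_excess by linarith

lemma hausdorff_dist_diff_le:
  assumes "A \<noteq> {}" "B \<noteq> {}" "C \<noteq> {}" "D \<noteq> {}"
    and "bounded A" "bounded B" "bounded C" "bounded D"
  shows "\<bar>hausdorff_dist A B - hausdorff_dist C D\<bar> \<le> hausdorff_dist A C + hausdorff_dist B D"
  using hausdorff_dist_triangle[of A C B] hausdorff_dist_triangle[of C D B]
    hausdorff_dist_triangle[of C A D] hausdorff_dist_triangle[of A B D]
    hausdorff_dist_commute[of C A] hausdorff_dist_commute[of D B] assms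
  by linarith

lemma continuous_on_hausdorff_dist_pair:
  fixes f :: "'a::metric_space \<Rightarrow> real set"
  assumes ne_bdd: "\<And>x. x \<in> A \<Longrightarrow> f x \<noteq> {} \<and> bounded (f x)"
    and cont: "\<And>x e. x \<in> A \<Longrightarrow> e > 0 \<Longrightarrow>
      \<exists>d>0. \<forall>y\<in>A. dist y x < d \<longrightarrow> hausdorff_dist (f y) (f x) < e"
  shows "continuous_on (A \<times> A) (\<lambda>p. hausdorff_dist (f (fst p)) (f (snd p)))"
  unfolding continuous_on_iff
proof (intro ballI allI impI)
  fix p and e :: real assume p: "p \<in> A \<times> A" and e: "0 < e"
  obtain d1 where d1: "d1 > 0"
    "\<forall>y\<in>A. dist y (fst p) < d1 \<longrightarrow> hausdorff_dist (f y) (f (fst p)) < e/2"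
    using cont[of "fst p" "e/2"] p e by auto
  obtain d2 where d2: "d2 > 0"
    "\<forall>y\<in>A. dist y (snd p) < d2 \<longrightarrow> hausdorff_dist (f y) (f (snd p)) < e/2"
    using cont[of "snd p" "e/2"] p e by auto
  show "\<exists>d>0. \<forall>q\<in>A \<times> A. dist q p < d \<longrightarrow>
    dist (hausdorff_dist (f (fst q)) (f (snd q))) (hausdorff_dist (f (fst p)) (f (snd p))) < e"
  proof (intro exI conjI ballI impI)
    show "min d1 d2 > 0" using d1 d2 by simp
    fix q assume q: "q \<in> A \<times> A" and "dist q p < min d1 d2"
    then have "dist (fst q) (fst p) < d1" "dist (snd q) (snd p) < d2"
      using dist_fst_le[of q p] dist_snd_le[of q p] by linarith+
    then have "hausdorff_dist (f (fst q)) (f (fst p)) < e/2"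
      "hausdorff_dist (f (snd q)) (f (snd p)) < e/2"
      using d1 d2 q by auto
    moreover have "\<bar>hausdorff_dist (f (fst q)) (f (snd q)) - hausdorff_dist (f (fst p)) (f (snd p))\<bar>
        \<le> hausdorff_dist (f (fst q)) (f (fst p)) + hausdorff_dist (f (snd q)) (f (snd p))"
      by (rule hausdorff_dist_diff_le) (use ne_bdd p q in auto)
    ultimately show "dist (hausdorff_dist (f (fst q)) (f (snd q)))
        (hausdorff_dist (f (fst p)) (f (snd p))) < e"
      by (simp add: dist_real_def)
  qed
qed

lemma compact_connected_nonneg_eq_Icc_0:
  fixes D :: "real set"
  assumes "compact D" "connected D" "0 \<in> D" "\<And>t. t \<in> D \<Longrightarrow> 0 \<le> t"
  obtains M where "D = {0..M}"
proof -
  obtain c d where cd: "D = {c..d}" using connected_compact_interval_1 assms(1,2) by blast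
  with assms(3) have "c \<in> D" by auto
  with assms(3,4) cd have "c = 0" by force
  with cd that[of d] show ?thesis by simp
qed

lemma bounded_subset_Icc_diameter:
  fixes U :: "real set"
  assumes "bounded U"
  shows "U \<subseteq> {Inf U .. Inf U + diameter U}"
proof
  fix u assume u: "u \<in> U"
  have "Inf U \<le> u" using cInf_lower[OF u] assms by (simp add: bounded_imp_bdd_below)
  moreover have "u - diameter U \<le> Inf U"
  proof (rule cInf_greatest)
    fix v assume "v \<in> U"
    then have "dist u v \<le> diameter U" using diameter_bounded_bound[OF assms u] by blast
    then show "u - diameter U \<le> v" by (simp add: dist_real_def)
  qed (use u in blast)
  ultimately show "u \<in> {Inf U .. Inf U + diameter U}" by simp
qed

lemma Icc_length_le_suminf_diameter:
  fixes U :: "nat \<Rightarrow> real set"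
  assumes "a \<le> b" "\<And>i. bounded (U i)" "{a..b} \<subseteq> (\<Union>i. U i)"
  shows "ennreal (b - a) \<le> (\<Sum>i. ennreal (diameter (U i)))"
proof -
  define I where "I i = {Inf (U i) .. Inf (U i) + diameter (U i)}" for i
  have "ennreal (b - a) = emeasure lborel {a..b}" using assms(1) by simp
  also have "\<dots> \<le> emeasure lborel (\<Union>i. I i)"
  proof (rule emeasure_mono)
    show "{a..b} \<subseteq> (\<Union>i. I i)"
      using assms(2,3) bounded_subset_Icc_diameter unfolding I_def by blast
  qed (simp add: I_def)
  also have "\<dots> \<le> (\<Sum>i. emeasure lborel (I i))"
    by (rule emeasure_subadditive_countably) (auto simp: I_def)
  also have "\<dots> = (\<Sum>i. ennreal (diameter (U i)))"
    using assms(2) by (simp add: I_def diameter_ge_0)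
  finally show ?thesis .
qed

lemma Icc_length_le_card_mul_diameter:
  fixes F :: "real set set"
  assumes "a \<le> b" "finite F" "\<And>U. U \<in> F \<Longrightarrow> bounded U \<and> diameter U \<le> \<delta>" "{a..b} \<subseteq> \<Union>F"
  shows "b - a \<le> real (card F) * \<delta>"
proof -
  define I where "I U = {Inf U .. Inf U + diameter U}" for U :: "real set"
  have "ennreal (b - a) = emeasure lborel {a..b}" using assms(1) by simp
  also have "\<dots> \<le> emeasure lborel (\<Union>U\<in>F. I U)"
  proof (rule emeasure_mono)
    show "{a..b} \<subseteq> (\<Union>U\<in>F. I U)"
      using assms(3,4) bounded_subset_Icc_diameter unfolding I_def by blast
  qed (use assms(2) in \<open>auto intro!: borel_closed closed_UN simp: I_def\<close>)
  also have "\<dots> \<le> (\<Sum>U\<in>F. emeasure lborel (I U))"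
    by (rule emeasure_subadditive_finite) (auto simp: I_def assms(2))
  also have "\<dots> = (\<Sum>U\<in>F. ennreal (diameter U))"
    using assms(3) by (simp add: I_def diameter_ge_0)
  also have "\<dots> \<le> (\<Sum>U\<in>F. ennreal \<delta>)"
    by (rule sum_mono) (use assms(3) in \<open>auto intro: ennreal_leI\<close>)
  also have "\<dots> = ennreal (real (card F) * \<delta>)"
    by (simp add: ennreal_mult' ennreal_of_nat_eq_real_of_nat)
  finally have "ennreal (b - a) \<le> ennreal (real (card F) * \<delta>)" .
  moreover have "F \<noteq> {}" using assms(1,4) by auto
  then have "0 \<le> \<delta>" using assms(3) diameter_ge_0 by (meson all_not_in_conv order_trans)
  ultimately show ?thesis by (simp add: ennreal_le_iff)
qed

definition grid_interval :: "real \<Rightarrow> real \<Rightarrow> nat \<Rightarrow> real set" where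
  "grid_interval a h k = {a + real k * h .. a + real (Suc k) * h}"

lemma bounded_grid_interval [simp]: "bounded (grid_interval a h k)"
  by (simp add: grid_interval_def)

lemma diameter_grid_interval [simp]: "h \<ge> 0 \<Longrightarrow> diameter (grid_interval a h k) = h"
  by (simp add: grid_interval_def algebra_simps)

lemma Icc_subset_grid_intervals:
  assumes "h > 0"
  shows "{a..b} \<subseteq> (\<Union>k < nat \<lfloor>(b - a) / h\<rfloor> + 1. grid_interval a h k)"
proof
  fix x assume x: "x \<in> {a..b}"
  define k where "k = nat \<lfloor>(x - a) / h\<rfloor>"
  have "0 \<le> \<lfloor>(x - a) / h\<rfloor>" using assms x by simp
  then have k: "real k = of_int \<lfloor>(x - a) / h\<rfloor>" unfolding k_def by simp
  have "\<lfloor>(x - a) / h\<rfloor> \<le> \<lfloor>(b - a) / h\<rfloor>"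
    using assms x by (intro floor_mono divide_right_mono) auto
  then have "k < nat \<lfloor>(b - a) / h\<rfloor> + 1" unfolding k_def by linarith
  moreover have "real k \<le> (x - a) / h" "(x - a) / h < real k + 1"
    unfolding k by linarith+
  then have "x \<in> grid_interval a h k"
    using assms by (simp add: grid_interval_def field_simps)
  ultimately show "x \<in> (\<Union>k < nat \<lfloor>(b - a) / h\<rfloor> + 1. grid_interval a h k)" by blast
qed

lemma hausdorff_pre_Icc_le_grid:
  assumes "a \<le> b" "0 < h" "h \<le> \<delta>"
  shows "hausdorff_pre s \<delta> {a..b} \<le> ennreal (((b - a) / h + 1) * h powr s)"
proof -
  define m where "m = nat \<lfloor>(b - a) / h\<rfloor> + 1"
  define U where "U k = (if k < m then grid_interval a h k else {})" for k
  have "hausdorff_pre s \<delta> {a..b} \<le> (\<Sum>k. ennreal (diameter (U k) powr s))"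
    unfolding hausdorff_pre_def
  proof (rule INF_lower, safe)
    show "bounded (U k)" "diameter (U k) \<le> \<delta>" for k
      using assms by (auto simp: U_def)
    show "x \<in> (\<Union>k. U k)" if x: "x \<in> {a..b}" for x
    proof -
      obtain k where "k < m" "x \<in> grid_interval a h k"
        using Icc_subset_grid_intervals[OF assms(2), of a b] x unfolding m_def by blast
      then show ?thesis unfolding U_def by (intro UN_I[of k]) auto
    qed
  qed
  also have "\<dots> = (\<Sum>k<m. ennreal (h powr s))"
    by (subst suminf_finite[of "{..<m}"]) (use assms(2) in \<open>auto simp: U_def\<close>)
  also have "\<dots> = ennreal (real m * h powr s)"
    by (simp add: ennreal_mult' ennreal_of_nat_eq_real_of_nat)
  also have "\<dots> \<le> ennreal (((b - a) / h + 1) * h powr s)"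
    unfolding m_def using assms of_nat_floor[of "(b - a) / h"]
    by (intro ennreal_leI mult_right_mono) auto
  finally show ?thesis .
qed

lemma hausdorff_measure_Icc_eq_0:
  assumes "a < b" "s > 1"
  shows "hausdorff_measure s {a..b} = 0"
proof -
  have bound: "hausdorff_pre s \<delta> {a..b} \<le> ennreal e" if "\<delta> > 0" "e > 0" for \<delta> e :: real
  proof -
    have "((\<lambda>h::real. ((b - a) / h + 1) * h powr s) \<longlongrightarrow> 0) (at_right 0)"
      using assms by real_asymp
    then have "\<forall>\<^sub>F h in at_right 0. ((b - a) / h + 1) * h powr s < e"
      using \<open>e > 0\<close> by (rule order_tendstoD(2))
    moreover have "\<forall>\<^sub>F h in at_right 0. h \<in> {0<..<\<delta>}"
      using eventually_at_right_real[OF \<open>\<delta> > 0\<close>] .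
    ultimately have "\<forall>\<^sub>F h in at_right 0. ((b - a) / h + 1) * h powr s < e \<and> h \<in> {0<..<\<delta>}"
      by (rule eventually_conj)
    then obtain h where h: "((b - a) / h + 1) * h powr s < e" "0 < h" "h < \<delta>"
      using eventually_happens'[OF trivial_limit_at_right_real] by fastforce
    then have "hausdorff_pre s \<delta> {a..b} \<le> ennreal (((b - a) / h + 1) * h powr s)"
      using assms(1) by (intro hausdorff_pre_Icc_le_grid) auto
    also have "\<dots> \<le> ennreal e" using h(1) by (intro ennreal_leI) simp
    finally show ?thesis .
  qed
  have "hausdorff_pre s \<delta> {a..b} \<le> 0" if "\<delta> > 0" for \<delta>
    by (rule ennreal_le_epsilon) (simp add: bound that)
  then show ?thesis unfolding hausdorff_measure_def by simp
qed

lemma hausdorff_measure_Icc_neq_0: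
  assumes "a < b" "0 < s" "s \<le> 1"
  shows "hausdorff_measure s {a..b} \<noteq> 0"
proof -
  have "ennreal (b - a) \<le> hausdorff_pre s 1 {a..b}"
    unfolding hausdorff_pre_def
  proof (rule INF_greatest, safe)
    fix U :: "nat \<Rightarrow> real set"
    assume U: "\<forall>i. bounded (U i) \<and> diameter (U i) \<le> 1" "{a..b} \<subseteq> (\<Union>i. U i)"
    have "ennreal (b - a) \<le> (\<Sum>i. ennreal (diameter (U i)))"
      using Icc_length_le_suminf_diameter[of a b U] U assms(1) by simp
    also have "\<dots> \<le> (\<Sum>i. ennreal (diameter (U i) powr s))"
    proof (intro suminf_le summableI ennreal_leI)
      fix i
      have "diameter (U i) powr 1 \<le> diameter (U i) powr s"
        using U assms(3) diameter_ge_0 by (intro powr_mono') auto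
      then show "diameter (U i) \<le> diameter (U i) powr s" by (simp add: diameter_ge_0)
    qed
    finally show "ennreal (b - a) \<le> (\<Sum>i. ennreal (diameter (U i) powr s))" .
  qed
  also have "\<dots> \<le> hausdorff_measure s {a..b}"
    unfolding hausdorff_measure_def by (rule SUP_upper) auto
  finally show ?thesis using assms(1) by (auto simp: top_unique)
qed

lemma hausdorff_dim_Icc:
  assumes "a < b"
  shows "hausdorff_dim {a..b} = 1"
proof -
  have "{ereal s | s. s > 0 \<and> hausdorff_measure s {a..b} = 0} = {ereal s | s. s > 1}"
    using hausdorff_measure_Icc_eq_0[OF assms] hausdorff_measure_Icc_neq_0[OF assms]
    by (force simp: not_le)
  moreover have "Inf {ereal s | s. s > 1} = 1"
  proof (rule antisym)
    show "Inf {ereal s |s. 1 < s} \<le> 1"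
    proof (rule ereal_le_epsilon2)
      fix e :: real assume "0 < e"
      then have "Inf {ereal s |s. 1 < s} \<le> ereal (1 + e)" by (intro Inf_lower) auto
      then show "Inf {ereal s |s. 1 < s} \<le> 1 + ereal e" by (simp add: add.commute)
    qed
    show "1 \<le> Inf {ereal s |s. 1 < s}" by (rule Inf_greatest) auto
  qed
  ultimately show ?thesis unfolding hausdorff_dim_def by simp
qed

lemma cover_number_Icc_bounds:
  assumes "a < b" "\<delta> > 0"
  shows "(b - a) / \<delta> \<le> real (cover_number \<delta> {a..b})"
    and "real (cover_number \<delta> {a..b}) \<le> (b - a) / \<delta> + 1"
proof -
  define S where "S = {card F | F. finite F \<and> {a..b} \<subseteq> \<Union>F \<and>
       (\<forall>U\<in>F. bounded U \<and> diameter U \<le> \<delta>)}"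
  have N: "cover_number \<delta> {a..b} = Inf S" unfolding cover_number_def S_def ..
  define m where "m = nat \<lfloor>(b - a) / \<delta>\<rfloor> + 1"
  define G where "G = grid_interval a \<delta> ` {..<m}"
  have "finite G" "{a..b} \<subseteq> \<Union>G" "\<forall>U\<in>G. bounded U \<and> diameter U \<le> \<delta>"
    unfolding G_def m_def using Icc_subset_grid_intervals[OF assms(2)] assms(2) by auto
  then have "card G \<in> S" unfolding S_def by blast
  then have "Inf S \<le> card G" by (rule cInf_lower) simp
  also have "card G \<le> m" unfolding G_def using card_image_le[of "{..<m}"] by simp
  finally have "real (Inf S) \<le> real m" by (rule of_nat_mono)
  also have "\<dots> \<le> (b - a) / \<delta> + 1" unfolding m_def using assms of_nat_floor[of "(b - a) / \<delta>"] by simp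
  finally show "real (cover_number \<delta> {a..b}) \<le> (b - a) / \<delta> + 1" unfolding N .
  from \<open>card G \<in> S\<close> have "Inf S \<in> S" using Inf_nat_def1 by blast
  then obtain F where F: "Inf S = card F" "finite F" "{a..b} \<subseteq> \<Union>F"
    "\<forall>U\<in>F. bounded U \<and> diameter U \<le> \<delta>" unfolding S_def by blast
  then have "b - a \<le> real (card F) * \<delta>"
    using Icc_length_le_card_mul_diameter[of a b F \<delta>] assms(1) by auto
  then show "(b - a) / \<delta> \<le> real (cover_number \<delta> {a..b})"
    unfolding N F(1) using assms(2) by (simp add: divide_le_eq)
qed

lemma box_dim_ratio_Icc_tendsto:
  assumes "a < b"
  shows "((\<lambda>\<delta>. ln (real (cover_number \<delta> {a..b})) / - ln \<delta>) \<longlongrightarrow> 1) (at_right 0)"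
proof (rule tendsto_sandwich)
  have "\<forall>\<^sub>F \<delta> in at_right 0. \<delta> \<in> {0<..<1::real}"
    by (rule eventually_at_right_real) simp
  moreover have "ln ((b - a) / \<delta>) / - ln \<delta> \<le> ln (real (cover_number \<delta> {a..b})) / - ln \<delta>
      \<and> ln (real (cover_number \<delta> {a..b})) / - ln \<delta> \<le> ln ((b - a) / \<delta> + 1) / - ln \<delta>"
    if "\<delta> \<in> {0<..<1}" for \<delta> :: real
  proof -
    have pos: "0 < \<delta>" "0 < - ln \<delta>" "0 < (b - a) / \<delta>" using that assms by auto
    then have "ln ((b - a) / \<delta>) \<le> ln (real (cover_number \<delta> {a..b}))"
      "ln (real (cover_number \<delta> {a..b})) \<le> ln ((b - a) / \<delta> + 1)"
      using cover_number_Icc_bounds[OF assms pos(1)] by (subst ln_le_cancel_iff; simp)+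
    then show ?thesis using pos(2) by (auto intro: divide_right_mono_neg)
  qed
  ultimately show "\<forall>\<^sub>F \<delta> in at_right 0. ln ((b - a) / \<delta>) / - ln \<delta>
      \<le> ln (real (cover_number \<delta> {a..b})) / - ln \<delta>"
    and "\<forall>\<^sub>F \<delta> in at_right 0. ln (real (cover_number \<delta> {a..b})) / - ln \<delta>
      \<le> ln ((b - a) / \<delta> + 1) / - ln \<delta>"
    by (auto elim: eventually_mono)
  show "((\<lambda>\<delta>. ln ((b - a) / \<delta>) / - ln \<delta>) \<longlongrightarrow> 1) (at_right 0)"
    and "((\<lambda>\<delta>. ln ((b - a) / \<delta> + 1) / - ln \<delta>) \<longlongrightarrow> 1) (at_right 0)"
    using assms by real_asymp+
qed

lemma box_dims_Icc:
  assumes "a < b"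
  shows "lower_box_dim {a..b} = 1" and "upper_box_dim {a..b} = 1"
proof -
  note lim = tendsto_ereal[OF box_dim_ratio_Icc_tendsto[OF assms]]
  show "lower_box_dim {a..b} = 1" "upper_box_dim {a..b} = 1"
    using lim_imp_Liminf[OF _ lim] lim_imp_Limsup[OF _ lim]
    unfolding lower_box_dim_def upper_box_dim_def by (simp_all add: one_ereal_def)
qed

theorem proposition4p5:
  fixes a b :: real and f :: "real \<Rightarrow> real set"
  assumes "a < b"
    and "\<forall>x\<in>{a..b}. f x \<noteq> {} \<and> compact (f x)"
    and "\<forall>x\<in>{a..b}. \<forall>e>0. \<exists>d>0. \<forall>y\<in>{a..b}. \<bar>y - x\<bar> < d \<longrightarrow> hausdorff_dist (f y) (f x) < e"
  shows "is_interval {\<bar>x - y\<bar> + hausdorff_dist (f x) (f y) | x y. x \<in> {a..b} \<and> y \<in> {a..b}}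
    \<and> hausdorff_dim {\<bar>x - y\<bar> + hausdorff_dist (f x) (f y) | x y. x \<in> {a..b} \<and> y \<in> {a..b}} = 1
    \<and> lower_box_dim {\<bar>x - y\<bar> + hausdorff_dist (f x) (f y) | x y. x \<in> {a..b} \<and> y \<in> {a..b}} = 1
    \<and> upper_box_dim {\<bar>x - y\<bar> + hausdorff_dist (f x) (f y) | x y. x \<in> {a..b} \<and> y \<in> {a..b}} = 1"
proof -
  define D where "D = {\<bar>x - y\<bar> + hausdorff_dist (f x) (f y) | x y. x \<in> {a..b} \<and> y \<in> {a..b}}"
  define g where "g p = dist (fst p) (snd p) + hausdorff_dist (f (fst p)) (f (snd p))" for p
  have ne_bdd: "\<And>x. x \<in> {a..b} \<Longrightarrow> f x \<noteq> {} \<and> bounded (f x)"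
    using assms(2) compact_imp_bounded by blast
  have "continuous_on ({a..b} \<times> {a..b}) g"
    unfolding g_def
    by (intro continuous_intros continuous_on_hausdorff_dist_pair ne_bdd)
      (use assms(3) in \<open>auto simp: dist_real_def\<close>)
  moreover have D_image: "D = g ` ({a..b} \<times> {a..b})"
    unfolding D_def g_def by (force simp: dist_real_def)
  ultimately have "compact D" "connected D"
    by (auto intro: compact_continuous_image connected_continuous_image compact_Times connected_Times)
  moreover have "0 \<in> D"
    unfolding D_image g_def using assms(1) hausdorff_dist_self ne_bdd
    by (intro image_eqI[of _ _ "(a, a)"]) auto
  moreover have "t \<in> D \<Longrightarrow> 0 \<le> t" for t
    unfolding D_def using hausdorff_dist_nonneg ne_bdd by fastforce
  ultimately obtain M where M: "D = {0..M}" by (rule compact_connected_nonneg_eq_Icc_0)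
  have "b - a + hausdorff_dist (f b) (f a) \<in> D"
    unfolding D_def using assms(1) by (intro CollectI exI[of _ b] exI[of _ a]) auto
  then have "0 < M"
    using M assms(1) hausdorff_dist_nonneg[of "f b" "f a"] ne_bdd by force
  then show ?thesis
    unfolding D_def[symmetric] M using hausdorff_dim_Icc box_dims_Icc by simp
qed

end
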